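(* Let $\phi:\mathbb{R}^N\times\mathbb{R}^N\to\mathbb{R}$ be differentiable. Consider the problem of minimizing, over Lipschitz-in-$\mathbf{x}$ fields $\mathbf{u}:[0,T]\times\mathbb{R}^N\to\mathbb{R}^N$, the cost $\int_0^T\phi(\mathbf{x}(t),\mathbf{x}'(t))\,dt$ where $\mathbf{x}'(t)=\mathbf{u}(t,\mathbf{x}(t))$, $\mathbf{x}(0)=\mathbf{x}_0$, for every initial datum $\mathbf{x}_0\in\mathbb{R}^N$. If $\mathbf{u}$ is optimal (for all $\mathbf{x}_0$), then the solution $\mathbf{p}:[0,T]\times\mathbb{R}^N\to\mathbb{R}^N$ (row vector) of the linear transport system $\mathbf{p}_t+\nabla\mathbf{p}\,\mathbf{u}+\mathbf{p}\,\nabla\mathbf{u}=\nabla_{\mathbf{x}}[\phi(\mathbf{x},\mathbf{u}(t,\mathbf{x}))]$ in $[0,T]\times\mathbb{R}^N$, with $\mathbf{p}(T,\mathbf{x})=0$, coincides with $\phi_\xi(\mathbf{x},\mathbf{u}(t,\mathbf{x}))$ along trajectories, i.e. $\mathbf{p}(t,\mathbf{x})\equiv\phi_\xi(\mathbf{x},\mathbf{u}(t,\mathbf{x}))$.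
   Context: $\nabla$ denotes the Jacobian in the spatial variable $\mathbf{x}$; $\nabla_{\mathbf{x}}[\phi(\mathbf{x},\mathbf{u}(t,\mathbf{x}))]=\phi_{\mathbf{x}}(\mathbf{x},\mathbf{u})+\phi_\xi(\mathbf{x},\mathbf{u})\nabla\mathbf{u}$. *)

theory Defs
  imports "HOL-Analysis.Analysis"
begin

text \<open>Points of R^N are vectors of type real^'n ('n a finite index type, N = CARD('n)).
  Row vectors (p, phi_xi) are also represented as elements of real^'n, acting on
  column vectors by the inner product.\<close>

definition admissible_field :: "real \<Rightarrow> (real \<Rightarrow> real^'n \<Rightarrow> real^'n) \<Rightarrow> bool" where
  "admissible_field T v \<longleftrightarrow>
     continuous_on ({0..T} \<times> UNIV) (\<lambda>z. v (fst z) (snd z)) \<and>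
     (\<exists>L. \<forall>t\<in>{0..T}. L-lipschitz_on UNIV (v t))"

definition trajectory :: "real \<Rightarrow> (real \<Rightarrow> real^'n \<Rightarrow> real^'n) \<Rightarrow> real^'n \<Rightarrow> (real \<Rightarrow> real^'n) \<Rightarrow> bool" where
  "trajectory T v x0 x \<longleftrightarrow>
     x 0 = x0 \<and> (\<forall>t\<in>{0..T}. (x has_vector_derivative v t (x t)) (at t within {0..T}))"

definition cost :: "real \<Rightarrow> (real^'n \<Rightarrow> real^'n \<Rightarrow> real) \<Rightarrow> (real \<Rightarrow> real^'n \<Rightarrow> real^'n) \<Rightarrow> (real \<Rightarrow> real^'n) \<Rightarrow> real" where
  "cost T \<phi> v x = integral {0..T} (\<lambda>t. \<phi> (x t) (v t (x t)))"

definition optimal_field :: "real \<Rightarrow> (real^'n \<Rightarrow> real^'n \<Rightarrow> real) \<Rightarrow> (real \<Rightarrow> real^'n \<Rightarrow> real^'n) \<Rightarrow> bool" where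
  "optimal_field T \<phi> u \<longleftrightarrow> admissible_field T u \<and>
     (\<forall>x0 v y z. admissible_field T v \<longrightarrow> trajectory T u x0 y \<longrightarrow> trajectory T v x0 z \<longrightarrow>
        cost T \<phi> u y \<le> cost T \<phi> v z)"

text \<open>Row vector of partial derivatives phi_xi(x,xi), from the total derivative D of
  (x,xi) |-> phi x xi.\<close>
definition partial_xi :: "((real^'n) \<times> (real^'n) \<Rightarrow> ((real^'n) \<times> (real^'n)) \<Rightarrow>\<^sub>L real) \<Rightarrow> real^'n \<Rightarrow> real^'n \<Rightarrow> real^'n" where
  "partial_xi D x \<xi> = (\<chi> i. blinfun_apply (D (x, \<xi>)) (0, axis i 1))"

end

theory Submission
  imports Defs
begin

text \<open>Along a trajectory \<open>X\<close> of \<open>u\<close> let \<open>a(t) = \<phi>\<^sub>x(X, u(t,X))\<close> and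
  \<open>q(t) = \<phi>\<^sub>\<xi>(X, u(t,X))\<close>. Comparing \<open>u\<close> with the admissible fields
  \<open>y \<mapsto> u(t, y - e g(t)) + e g'(t)\<close>, whose trajectories are \<open>X + e g\<close>, shows that the
  first variation \<open>\<integral> a\<cdot>g + q\<cdot>g'\<close> vanishes for every \<open>g\<close> with \<open>g(0) = 0\<close>; by the
  du Bois-Reymond lemma \<open>q' = a\<close> and \<open>q(T) = 0\<close>. The transport equation says that
  \<open>P(t) = p(t, X(t))\<close> satisfies \<open>P' = a + (q - P) \<nabla>u\<close>, so \<open>R = q - P\<close> solves the linear
  equation \<open>R' = - R \<nabla>u\<close> with \<open>R(T) = 0\<close>, and a Gronwall estimate gives \<open>R = 0\<close>.
  Since \<open>u\<close> is Lipschitz in \<open>x\<close>, every point \<open>(t, x)\<close> lies on a trajectory (Picard iteration),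
  so \<open>p = \<phi>\<^sub>\<xi>\<close> everywhere.\<close>

section \<open>Trajectories of Lipschitz fields\<close>

lemma continuous_on_along_curve:
  assumes "continuous_on (S \<times> UNIV) (\<lambda>z. f (fst z) (snd z))" and "continuous_on S Y"
  shows "continuous_on S (\<lambda>s. f s (Y s))"
proof -
  have "continuous_on S (\<lambda>s. (s, Y s))" by (intro continuous_intros assms(2))
  from continuous_on_compose2[OF assms(1) this] show ?thesis by auto
qed

lemma has_integral_power_over_fact:
  fixes a t :: real
  assumes "a \<le> t"
  shows "((\<lambda>s. (s - a) ^ k / fact k) has_integral (t - a) ^ Suc k / fact (Suc k)) {a..t}"
proof -
  have "((\<lambda>s. (s - a) ^ Suc k / fact (Suc k)) has_real_derivative
      of_nat (Suc k) * ((1 - 0) * (s - a) ^ (Suc k - Suc 0)) / fact (Suc k)) (at s within {a..t})" for s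
    by (intro DERIV_cdivide DERIV_power DERIV_diff DERIV_ident DERIV_const)
  then have "((\<lambda>s. (s - a) ^ Suc k / fact (Suc k)) has_vector_derivative (s - a) ^ k / fact k)
      (at s within {a..t})" for s
    by (simp add: fact_Suc has_real_derivative_iff_has_vector_derivative[symmetric])
  from fundamental_theorem_of_calculus[OF assms this] show ?thesis by simp
qed

lemma uniform_limit_lipschitz_compose:
  assumes lim: "uniform_limit S X Y F" and lip: "\<And>s. s \<in> S \<Longrightarrow> L-lipschitz_on UNIV (f s)"
  shows "uniform_limit S (\<lambda>n s. f s (X n s)) (\<lambda>s. f s (Y s)) F"
  unfolding uniform_limit_iff
proof (intro allI impI)
  fix e :: real assume "0 < e"
  then have "\<forall>\<^sub>F n in F. \<forall>s\<in>S. dist (X n s) (Y s) < e / (\<bar>L\<bar> + 1)"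
    using lim unfolding uniform_limit_iff by simp
  then show "\<forall>\<^sub>F n in F. \<forall>s\<in>S. dist (f s (X n s)) (f s (Y s)) < e"
  proof (rule eventually_mono, intro ballI)
    fix n s assume close: "\<forall>s\<in>S. dist (X n s) (Y s) < e / (\<bar>L\<bar> + 1)" and s: "s \<in> S"
    have "dist (f s (X n s)) (f s (Y s)) \<le> L * dist (X n s) (Y s)"
      using lip[OF s] by (simp add: lipschitz_on_def)
    also have "\<dots> \<le> \<bar>L\<bar> * (e / (\<bar>L\<bar> + 1))"
      using close s by (intro mult_mono) auto
    also have "\<dots> < e"
      using \<open>0 < e\<close> by (simp add: field_simps)
    finally show "dist (f s (X n s)) (f s (Y s)) < e" .
  qed
qed

lemma uniform_limit_of_summable_increments:
  fixes X :: "nat \<Rightarrow> 'b \<Rightarrow> 'a::banach"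
  assumes "\<And>k t. t \<in> S \<Longrightarrow> norm (X (Suc k) t - X k t) \<le> M k" and "summable M"
  obtains Y where "uniform_limit S X Y sequentially"
proof
  have telescope: "(\<Sum>k<n. X (Suc k) t - X k t) = X n t - X 0 t" for n t
    by (rule sum_lessThan_telescope)
  have "uniform_limit S (\<lambda>n t. \<Sum>k<n. X (Suc k) t - X k t) (\<lambda>t. \<Sum>k. X (Suc k) t - X k t) sequentially"
    using assms by (rule Weierstrass_m_test)
  then show "uniform_limit S X (\<lambda>t. X 0 t + (\<Sum>k. X (Suc k) t - X k t)) sequentially"
    unfolding uniform_limit_iff telescope by (simp add: dist_norm algebra_simps)
qed

definition picard_map ::
    "(real \<Rightarrow> 'a \<Rightarrow> 'a::banach) \<Rightarrow> real \<Rightarrow> 'a \<Rightarrow> (real \<Rightarrow> 'a) \<Rightarrow> real \<Rightarrow> 'a" where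
  "picard_map f a x0 Y t = x0 + integral {a..t} (\<lambda>s. f s (Y s))"

context
  fixes f :: "real \<Rightarrow> 'a::banach \<Rightarrow> 'a" and a b L :: real
  assumes f_cont: "continuous_on ({a..b} \<times> UNIV) (\<lambda>z. f (fst z) (snd z))"
    and f_lip: "\<And>t. t \<in> {a..b} \<Longrightarrow> L-lipschitz_on UNIV (f t)"
begin

lemma integrable_along_curve:
  assumes "continuous_on {a..b} Y" and "t \<le> b"
  shows "(\<lambda>s. f s (Y s)) integrable_on {a..t}"
  using assms by (intro integrable_continuous_real continuous_on_subset[OF continuous_on_along_curve[OF f_cont]]) auto

lemma continuous_on_picard_map:
  assumes "continuous_on {a..b} Y"
  shows "continuous_on {a..b} (picard_map f a x0 Y)"
  unfolding picard_map_def[abs_def] using integrable_along_curve[OF assms order_refl]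
  by (intro continuous_intros indefinite_integral_continuous_1)

lemma picard_map_dist_le:
  assumes Y: "continuous_on {a..b} Y" and Z: "continuous_on {a..b} Z" and t: "t \<in> {a..b}"
    and bound: "\<And>s. s \<in> {a..b} \<Longrightarrow> norm (Y s - Z s) \<le> M * (L * (s - a)) ^ k / fact k"
  shows "norm (picard_map f a x0 Y t - picard_map f a x0 Z t) \<le> M * (L * (t - a)) ^ Suc k / fact (Suc k)"
proof -
  have L: "0 \<le> L" using f_lip[of t] t lipschitz_on_nonneg by blast
  have majorant: "((\<lambda>s. M * L ^ Suc k * ((s - a) ^ k / fact k)) has_integral
      M * (L * (t - a)) ^ Suc k / fact (Suc k)) {a..t}"
    using has_integral_mult_right[where c = "M * L ^ Suc k", OF has_integral_power_over_fact[of a t k]] t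
    by (simp add: power_mult_distrib mult_ac)
  have "norm (picard_map f a x0 Y t - picard_map f a x0 Z t) = norm (integral {a..t} (\<lambda>s. f s (Y s) - f s (Z s)))"
    using t by (simp add: picard_map_def integral_diff integrable_along_curve[OF Y] integrable_along_curve[OF Z])
  also have "\<dots> \<le> integral {a..t} (\<lambda>s. M * L ^ Suc k * ((s - a) ^ k / fact k))"
  proof (rule integral_norm_bound_integral)
    show "(\<lambda>s. f s (Y s) - f s (Z s)) integrable_on {a..t}"
      using t by (intro integrable_diff integrable_along_curve Y Z) auto
    show "(\<lambda>s. M * L ^ Suc k * ((s - a) ^ k / fact k)) integrable_on {a..t}"
      using majorant by blast
    fix s assume s: "s \<in> {a..t}"
    then have "s \<in> {a..b}" using t by auto
    then have "norm (f s (Y s) - f s (Z s)) \<le> L * (M * (L * (s - a)) ^ k / fact k)"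
      using lipschitz_on_normD[OF f_lip] bound L by (meson UNIV_I mult_left_mono order_trans)
    also have "\<dots> = M * L ^ Suc k * ((s - a) ^ k / fact k)"
      by (simp add: power_mult_distrib mult_ac)
    finally show "norm (f s (Y s) - f s (Z s)) \<le> M * L ^ Suc k * ((s - a) ^ k / fact k)" .
  qed
  also have "\<dots> = M * (L * (t - a)) ^ Suc k / fact (Suc k)"
    using majorant by (rule integral_unique)
  finally show ?thesis .
qed

lemma picard_map_tendsto:
  assumes lim: "uniform_limit {a..b} X Y sequentially" and X: "\<And>n. continuous_on {a..b} (X n)"
    and t: "t \<in> {a..b}"
  shows "(\<lambda>n. picard_map f a x0 (X n) t) \<longlonglongrightarrow> picard_map f a x0 Y t"
proof -
  have sub: "{a..t} \<subseteq> {a..b}" using t by auto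
  have limit: "uniform_limit {a..t} (\<lambda>n s. f s (X n s)) (\<lambda>s. f s (Y s)) sequentially"
    using uniform_limit_lipschitz_compose[OF uniform_limit_on_subset[OF lim sub]] f_lip sub by blast
  have cont: "continuous_on {a..t} (\<lambda>s. f s (X n s))" for n
    using continuous_on_subset[OF continuous_on_along_curve[OF f_cont X] sub] .
  obtain I J where I: "\<And>n. ((\<lambda>s. f s (X n s)) has_integral I n) {a..t}"
    and J: "((\<lambda>s. f s (Y s)) has_integral J) {a..t}" and "I \<longlonglongrightarrow> J"
    using uniform_limit_integral[OF limit cont sequentially_bot] by blast
  then show ?thesis
    unfolding picard_map_def integral_unique[OF I] integral_unique[OF J] by (intro tendsto_intros)
qed

lemma continuous_on_picard_iterate:
  "continuous_on {a..b} ((picard_map f a x0 ^^ k) (\<lambda>_. x0))"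
  by (induction k) (simp_all add: continuous_on_picard_map)

lemma picard_iterates_converge:
  fixes x0 :: 'a
  assumes "a \<le> b"
  obtains Y where "uniform_limit {a..b} (\<lambda>k. (picard_map f a x0 ^^ k) (\<lambda>_. x0)) Y sequentially"
proof -
  define X where "X k = (picard_map f a x0 ^^ k) (\<lambda>_. x0)" for k
  have "compact ((\<lambda>t. X 1 t - X 0 t) ` {a..b})"
    unfolding X_def by (intro compact_continuous_image continuous_intros continuous_on_picard_iterate) simp
  then obtain M where M: "\<And>t. t \<in> {a..b} \<Longrightarrow> norm (X 1 t - X 0 t) \<le> M"
    by (meson bounded_iff compact_imp_bounded imageI)
  have "M \<ge> 0" using M[of a] assms by (meson norm_ge_zero order_trans atLeastAtMost_iff order_refl)
  have "L \<ge> 0" using f_lip[of a] assms lipschitz_on_nonneg by auto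
  have X_Suc: "X (Suc k) = picard_map f a x0 (X k)" for k
    by (simp add: X_def)
  have X_cont: "continuous_on {a..b} (X k)" for k
    unfolding X_def by (rule continuous_on_picard_iterate)
  have incr: "norm (X (Suc k) t - X k t) \<le> M * (L * (t - a)) ^ k / fact k" if "t \<in> {a..b}" for k t
    using that
  proof (induction k arbitrary: t)
    case 0 then show ?case using M by simp
  next
    case (Suc k)
    have "norm (picard_map f a x0 (X (Suc k)) t - picard_map f a x0 (X k) t)
        \<le> M * (L * (t - a)) ^ Suc k / fact (Suc k)"
      by (rule picard_map_dist_le[OF X_cont X_cont Suc.prems Suc.IH])
    then show ?case by (simp only: X_Suc)
  qed
  have "M * (L * (t - a)) ^ k / fact k \<le> M * (L * (b - a)) ^ k / fact k" if "t \<in> {a..b}" for k t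
    using that \<open>M \<ge> 0\<close> \<open>L \<ge> 0\<close> by (intro divide_right_mono mult_left_mono power_mono) auto
  then have "norm (X (Suc k) t - X k t) \<le> M * (L * (b - a)) ^ k / fact k" if "t \<in> {a..b}" for k t
    using incr[OF that] that by (meson order_trans)
  moreover have "summable (\<lambda>k. M * (L * (b - a)) ^ k / fact k)"
    using summable_mult[OF summable_exp, of M "L * (b - a)"] by (simp add: field_simps)
  ultimately show ?thesis
    unfolding X_def using that by (rule uniform_limit_of_summable_increments)
qed

lemma picard_map_has_fixpoint:
  fixes x0 :: 'a
  assumes "a \<le> b"
  obtains Y where "continuous_on {a..b} Y" and "\<And>t. t \<in> {a..b} \<Longrightarrow> picard_map f a x0 Y t = Y t"
proof -
  define X where "X k = (picard_map f a x0 ^^ k) (\<lambda>_. x0)" for k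
  have X_cont: "continuous_on {a..b} (X k)" for k
    unfolding X_def by (rule continuous_on_picard_iterate)
  obtain Y where lim: "uniform_limit {a..b} X Y sequentially"
    unfolding X_def using picard_iterates_converge[OF assms] .
  show ?thesis
  proof
    show "continuous_on {a..b} Y"
      using uniform_limit_theorem[OF _ lim] X_cont by simp
    fix t assume t: "t \<in> {a..b}"
    have "(\<lambda>n. X (Suc n) t) \<longlonglongrightarrow> picard_map f a x0 Y t"
      unfolding X_def funpow.simps o_apply using lim[unfolded X_def] X_cont[unfolded X_def] t
      by (rule picard_map_tendsto)
    moreover have "(\<lambda>n. X (Suc n) t) \<longlonglongrightarrow> Y t"
      using tendsto_uniform_limitI[OF lim t] by (rule LIMSEQ_Suc)
    ultimately show "picard_map f a x0 Y t = Y t"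
      by (rule LIMSEQ_unique)
  qed
qed

lemma lipschitz_ode_exists:
  fixes x0 :: 'a
  assumes "a \<le> b"
  obtains X where "X a = x0" and "\<And>t. t \<in> {a..b} \<Longrightarrow> (X has_vector_derivative f t (X t)) (at t within {a..b})"
proof -
  obtain Y where Y: "continuous_on {a..b} Y" and fixed: "\<And>t. t \<in> {a..b} \<Longrightarrow> picard_map f a x0 Y t = Y t"
    using picard_map_has_fixpoint[OF assms, of x0] by blast
  show ?thesis
  proof
    show "Y a = x0" using fixed[of a] assms by (simp add: picard_map_def)
    fix t assume t: "t \<in> {a..b}"
    have picard_deriv: "(picard_map f a x0 Y has_vector_derivative f t (Y t)) (at t within {a..b})"
      unfolding picard_map_def[abs_def]
      using integral_has_vector_derivative[OF continuous_on_along_curve[OF f_cont Y] t]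
      by (intro derivative_eq_intros) auto
    show "(Y has_vector_derivative f t (Y t)) (at t within {a..b})"
      by (rule has_vector_derivative_transform[OF t _ picard_deriv]) (simp add: fixed)
  qed
qed

end

lemma lipschitz_ode_exists_backward:
  fixes f :: "real \<Rightarrow> 'a::banach \<Rightarrow> 'a" and x :: 'a
  assumes f_cont: "continuous_on ({a..b} \<times> UNIV) (\<lambda>z. f (fst z) (snd z))"
    and f_lip: "\<And>t. t \<in> {a..b} \<Longrightarrow> L-lipschitz_on UNIV (f t)"
    and "a \<le> b"
  obtains X where "X b = x" and "\<And>t. t \<in> {a..b} \<Longrightarrow> (X has_vector_derivative f t (X t)) (at t within {a..b})"
proof -
  define g where "g s y = - f (a + b - s) y" for s y
  have "continuous_on ({a..b} \<times> UNIV) (\<lambda>z. f (fst (a + b - fst z, snd z)) (snd (a + b - fst z, snd z)))"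
    by (intro continuous_on_compose2[OF f_cont] continuous_intros) auto
  then have g_cont: "continuous_on ({a..b} \<times> UNIV) (\<lambda>z. g (fst z) (snd z))"
    unfolding g_def by (auto intro: continuous_intros)
  have g_lip: "L-lipschitz_on UNIV (g s)" if "s \<in> {a..b}" for s
    using f_lip[of "a + b - s"] that by (simp add: g_def lipschitz_on_def dist_minus)
  obtain Y where Y_a: "Y a = x"
    and Y_deriv: "\<And>s. s \<in> {a..b} \<Longrightarrow> (Y has_vector_derivative g s (Y s)) (at s within {a..b})"
    using lipschitz_ode_exists[OF g_cont g_lip \<open>a \<le> b\<close>, of x] by auto
  have reflect: "(\<lambda>t. a + b - t) ` {a..b} = {a..b}"
    by (auto simp: image_iff intro!: bexI[where x = "a + b - _"])
  show ?thesis
  proof (rule that[of "\<lambda>t. Y (a + b - t)"])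
    show "Y (a + b - b) = x" using Y_a by simp
    fix t assume "t \<in> {a..b}"
    have "((\<lambda>t. a + b - t) has_vector_derivative -1) (at t within {a..b})"
      by (auto intro!: derivative_eq_intros)
    from vector_diff_chain_within[OF this, of Y, unfolded reflect, OF Y_deriv] \<open>t \<in> {a..b}\<close>
    show "((\<lambda>t. Y (a + b - t)) has_vector_derivative f t (Y (a + b - t))) (at t within {a..b})"
      by (simp add: g_def o_def)
  qed
qed

lemma lipschitz_ode_exists_through:
  fixes f :: "real \<Rightarrow> 'a::banach \<Rightarrow> 'a" and x :: 'a
  assumes f_cont: "continuous_on ({a..b} \<times> UNIV) (\<lambda>z. f (fst z) (snd z))"
    and f_lip: "\<And>t. t \<in> {a..b} \<Longrightarrow> L-lipschitz_on UNIV (f t)"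
    and c: "c \<in> {a..b}"
  obtains X where "X c = x" and "\<And>t. t \<in> {a..b} \<Longrightarrow> (X has_vector_derivative f t (X t)) (at t within {a..b})"
proof -
  have left_cont: "continuous_on ({a..c} \<times> UNIV) (\<lambda>z. f (fst z) (snd z))"
    and right_cont: "continuous_on ({c..b} \<times> UNIV) (\<lambda>z. f (fst z) (snd z))"
    using c by (auto intro: continuous_on_subset[OF f_cont])
  have left_lip: "\<And>t. t \<in> {a..c} \<Longrightarrow> L-lipschitz_on UNIV (f t)"
    and right_lip: "\<And>t. t \<in> {c..b} \<Longrightarrow> L-lipschitz_on UNIV (f t)"
    using f_lip c by auto
  obtain Y where "Y c = x"
    and Y_deriv: "\<And>t. t \<in> {a..c} \<Longrightarrow> (Y has_vector_derivative f t (Y t)) (at t within {a..c})"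
    using lipschitz_ode_exists_backward[OF left_cont left_lip, of x] c by auto
  obtain Z where "Z c = x"
    and Z_deriv: "\<And>t. t \<in> {c..b} \<Longrightarrow> (Z has_vector_derivative f t (Z t)) (at t within {c..b})"
    using lipschitz_ode_exists[OF right_cont right_lip, of x] c by auto
  define X where "X t = (if t \<in> {a..c} then Y t else Z t)" for t
  show ?thesis
  proof
    show "X c = x" using c \<open>Y c = x\<close> by (simp add: X_def)
    fix t assume t: "t \<in> {a..b}"
    have meet: "closure {a..c} \<inter> closure {c..b} = {c}" using c by auto
    have left: "{a..c} \<union> {c} = {a..c}" and right: "{c..b} \<union> {c} = {c..b}" using c by auto
    have "(X has_vector_derivative (if t \<in> {a..c} then f t (Y t) else f t (Z t))) (at t within {a..b})"
      unfolding X_def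
      by (rule has_vector_derivative_If_within_closures[where T = "{c..b}"], unfold meet left right)
        (use t c \<open>Y c = x\<close> \<open>Z c = x\<close> Y_deriv Z_deriv in auto)
    then show "(X has_vector_derivative f t (X t)) (at t within {a..b})"
      by (simp add: X_def if_distrib)
  qed
qed

lemma trajectory_continuous_on:
  assumes "trajectory T u x0 X"
  shows "continuous_on {0..T} X"
  using assms unfolding trajectory_def
  using has_vector_derivative_continuous continuous_on_eq_continuous_within by blast

lemma admissible_field_continuous_along:
  assumes "admissible_field T u" and "continuous_on {0..T} X"
  shows "continuous_on {0..T} (\<lambda>t. u t (X t))"
proof -
  have "continuous_on ({0..T} \<times> UNIV) (\<lambda>z. u (fst z) (snd z))"
    using assms(1) by (simp add: admissible_field_def)
  then show ?thesis using assms(2) by (rule continuous_on_along_curve)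
qed

lemma admissible_field_trajectory_through:
  assumes "admissible_field T u" and "t0 \<in> {0..T}"
  obtains x0 X where "trajectory T u x0 X" and "X t0 = x"
proof -
  obtain L where u_cont: "continuous_on ({0..T} \<times> UNIV) (\<lambda>z. u (fst z) (snd z))"
    and u_lip: "\<And>t. t \<in> {0..T} \<Longrightarrow> L-lipschitz_on UNIV (u t)"
    using assms(1) unfolding admissible_field_def by blast
  obtain X where "X t0 = x"
    and "\<And>t. t \<in> {0..T} \<Longrightarrow> (X has_vector_derivative u t (X t)) (at t within {0..T})"
    using lipschitz_ode_exists_through[OF u_cont u_lip assms(2), of x] by blast
  then show ?thesis using that[of "X 0" X] by (simp add: trajectory_def)
qed

section \<open>Row vectors and partial derivatives\<close>

lemma lipschitz_on_has_derivative_norm_le: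
  fixes f :: "'a::real_normed_vector \<Rightarrow> 'b::real_normed_vector"
  assumes lip: "L-lipschitz_on UNIV f" and deriv: "(f has_derivative f') (at x)"
  shows "norm (f' v) \<le> L * norm v"
proof (cases "v = 0")
  case True
  then show ?thesis using linear_0[OF has_derivative_linear[OF deriv]] by simp
next
  case False
  then have nv: "0 < norm v" by simp
  show ?thesis
  proof (rule field_le_epsilon)
    fix e :: real assume "0 < e"
    then obtain d where "0 < d"
      and approx: "\<And>y. norm (y - x) < d \<Longrightarrow> norm (f y - f x - f' (y - x)) \<le> e / norm v * norm (y - x)"
      using deriv nv unfolding has_derivative_at_alt by (metis divide_pos_pos)
    define s where "s = d / (2 * norm v)"
    have "0 < s" using \<open>0 < d\<close> nv by (simp add: s_def)
    have step: "norm ((x + s *\<^sub>R v) - x) = s * norm v" using \<open>0 < s\<close> by simp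
    have "s * norm v < d" using \<open>0 < d\<close> nv by (simp add: s_def)
    then have remainder: "norm (f (x + s *\<^sub>R v) - f x - s *\<^sub>R f' v) \<le> e * s"
      using approx[of "x + s *\<^sub>R v"] nv \<open>0 < s\<close>
      by (simp add: step linear_scale[OF has_derivative_linear[OF deriv]])
    have increment: "norm (f (x + s *\<^sub>R v) - f x) \<le> L * (s * norm v)"
      using lipschitz_on_normD[OF lip] step by (metis UNIV_I)
    have "s * norm (f' v) \<le> norm (f (x + s *\<^sub>R v) - f x) + norm (f (x + s *\<^sub>R v) - f x - s *\<^sub>R f' v)"
      using norm_triangle_ineq4[of "f (x + s *\<^sub>R v) - f x" "f (x + s *\<^sub>R v) - f x - s *\<^sub>R f' v"] \<open>0 < s\<close>
      by simp
    also have "\<dots> \<le> s * (L * norm v + e)"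
      using increment remainder by (simp add: algebra_simps)
    finally show "norm (f' v) \<le> L * norm v + e" using \<open>0 < s\<close> by simp
  qed
qed

lemma linear_functional_vec_eq_inner:
  fixes g :: "real^'n \<Rightarrow> real"
  assumes "linear g"
  shows "g v = (\<chi> i. g (axis i 1)) \<bullet> v"
proof -
  have "g v = g (\<Sum>i\<in>UNIV. v $ i *\<^sub>R axis i 1)"
    using basis_expansion[of v] by (simp add: scalar_mult_eq_scaleR)
  also have "\<dots> = (\<chi> i. g (axis i 1)) \<bullet> v"
    by (simp add: linear_sum[OF assms] linear_scale[OF assms] inner_vec_def mult.commute)
  finally show ?thesis .
qed

definition partial_x ::
    "((real^'n) \<times> (real^'n) \<Rightarrow> ((real^'n) \<times> (real^'n)) \<Rightarrow>\<^sub>L real) \<Rightarrow> real^'n \<Rightarrow> real^'n \<Rightarrow> real^'n" where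
  "partial_x D x \<xi> = (\<chi> i. blinfun_apply (D (x, \<xi>)) (axis i 1, 0))"

lemma blinfun_apply_eq_partials:
  "blinfun_apply (D (x, \<xi>)) (v, w) = partial_x D x \<xi> \<bullet> v + partial_xi D x \<xi> \<bullet> w"
proof -
  have split: "blinfun_apply (D (x, \<xi>)) (v, w) = blinfun_apply (D (x, \<xi>)) (v, 0) + blinfun_apply (D (x, \<xi>)) (0, w)"
    by (simp flip: blinfun.add_right)
  have "linear (\<lambda>v. blinfun_apply (D (x, \<xi>)) (v, 0))" "linear (\<lambda>w. blinfun_apply (D (x, \<xi>)) (0, w))"
    by (intro bounded_linear.linear bounded_linear_compose[OF blinfun.bounded_linear_right]
        bounded_linear_Pair bounded_linear_ident bounded_linear_zero)+
  from linear_functional_vec_eq_inner[OF this(1), of v] linear_functional_vec_eq_inner[OF this(2), of w]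
  show ?thesis
    unfolding split partial_x_def partial_xi_def by simp
qed

text \<open>The row vector \<open>r A\<close>; \<open>row_times (p t x) (Du t x)\<close> is the term \<open>p \<nabla>u\<close> of the
  transport equation.\<close>

definition row_times :: "real^'n \<Rightarrow> (real^'n \<Rightarrow> real^'n) \<Rightarrow> real^'n" where
  "row_times r A = (\<chi> j. r \<bullet> A (axis j 1))"

lemma inner_row_times:
  assumes "linear A"
  shows "row_times r A \<bullet> v = r \<bullet> A v"
proof -
  have "linear (\<lambda>v. r \<bullet> A v)"
    using assms bounded_linear.linear[OF bounded_linear_inner_right]
    by (rule linear_compose[of A "\<lambda>w. r \<bullet> w", unfolded o_def])
  from linear_functional_vec_eq_inner[OF this, of v] show ?thesis by (simp only: row_times_def)
qed

lemma row_times_inner_le: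
  assumes "L-lipschitz_on UNIV f" and "(f has_derivative A) (at x)"
  shows "row_times r A \<bullet> r \<le> L * (r \<bullet> r)"
proof -
  have "row_times r A \<bullet> r = r \<bullet> A r"
    using inner_row_times[OF has_derivative_linear[OF assms(2)]] .
  also have "\<dots> \<le> norm r * norm (A r)"
    by (rule norm_cauchy_schwarz)
  also have "\<dots> \<le> norm r * (L * norm r)"
    by (intro mult_left_mono lipschitz_on_has_derivative_norm_le[OF assms]) simp
  also have "\<dots> = L * (r \<bullet> r)"
    by (simp add: dot_square_norm power2_eq_square)
  finally show ?thesis .
qed

section \<open>Backward uniqueness and the du Bois-Reymond lemma\<close>

lemma backward_uniqueness_zero:
  fixes R :: "real \<Rightarrow> 'a::real_inner"
  assumes deriv: "\<And>t. t \<in> {a..b} \<Longrightarrow> (R has_vector_derivative R' t) (at t within {a..b})"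
    and bound: "\<And>t. t \<in> {a..b} \<Longrightarrow> - L * (R t \<bullet> R t) \<le> R t \<bullet> R' t"
    and final: "R b = 0" and t: "t \<in> {a..b}"
  shows "R t = 0"
proof -
  define E where "E s = exp (2 * L * s) * (R s \<bullet> R s)" for s
  define E' where "E' s = exp (2 * L * s) * (2 * L * (R s \<bullet> R s) + 2 * (R s \<bullet> R' s))" for s
  have E_deriv: "(E has_real_derivative E' s) (at s within {a..b})" if s: "s \<in> {a..b}" for s
  proof -
    have "((\<lambda>s. R s \<bullet> R s) has_derivative (\<lambda>d. R s \<bullet> (d *\<^sub>R R' s) + (d *\<^sub>R R' s) \<bullet> R s))
        (at s within {a..b})"
      using deriv[OF s] deriv[OF s] unfolding has_vector_derivative_def by (rule has_derivative_inner)
    then have "((\<lambda>s. R s \<bullet> R s) has_real_derivative 2 * (R s \<bullet> R' s)) (at s within {a..b})"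
      unfolding has_field_derivative_def
      by (rule has_derivative_eq_rhs) (simp add: fun_eq_iff inner_commute algebra_simps)
    then show ?thesis
      unfolding E_def E'_def by (auto intro!: derivative_eq_intros simp: algebra_simps)
  qed
  have "E' s \<ge> 0" if "s \<in> {a..b}" for s
    using bound[OF that] unfolding E'_def by (intro mult_nonneg_nonneg) auto
  have "E t \<le> E b"
  proof (rule DERIV_nonneg_imp_increasing_open[of t b E])
    show "t \<le> b" using t by simp
    fix s assume s: "t < s" "s < b"
    then have "s \<in> {a..b}" and "at s within {a..b} = at s" using t by (auto intro: at_within_Icc_at)
    then show "\<exists>d. (E has_real_derivative d) (at s) \<and> 0 \<le> d"
      using E_deriv \<open>\<And>s. s \<in> {a..b} \<Longrightarrow> E' s \<ge> 0\<close> by metis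
  next
    have "continuous_on {a..b} E"
      using E_deriv DERIV_continuous continuous_on_eq_continuous_within by blast
    then show "continuous_on {t..b} E" by (rule continuous_on_subset) (use t in auto)
  qed
  then have "R t \<bullet> R t \<le> 0" using final by (simp add: E_def mult_le_0_iff)
  then show ?thesis using inner_ge_zero[of "R t"] by (simp add: order_antisym)
qed

lemma has_integral_inner_product_rule:
  fixes A g :: "real \<Rightarrow> 'a::real_inner"
  assumes "a \<le> b"
    and A: "\<And>t. t \<in> {a..b} \<Longrightarrow> (A has_vector_derivative A' t) (at t within {a..b})"
    and g: "\<And>t. t \<in> {a..b} \<Longrightarrow> (g has_vector_derivative g' t) (at t within {a..b})"
  shows "((\<lambda>t. A t \<bullet> g' t + A' t \<bullet> g t) has_integral A b \<bullet> g b - A a \<bullet> g a) {a..b}"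
proof (rule fundamental_theorem_of_calculus[OF \<open>a \<le> b\<close>])
  fix t assume t: "t \<in> {a..b}"
  have "((\<lambda>t. A t \<bullet> g t) has_derivative (\<lambda>d. A t \<bullet> (d *\<^sub>R g' t) + (d *\<^sub>R A' t) \<bullet> g t))
      (at t within {a..b})"
    using A[OF t] g[OF t] unfolding has_vector_derivative_def by (rule has_derivative_inner)
  then show "((\<lambda>t. A t \<bullet> g t) has_vector_derivative A t \<bullet> g' t + A' t \<bullet> g t) (at t within {a..b})"
    unfolding has_vector_derivative_def by (rule has_derivative_eq_rhs) (simp add: fun_eq_iff algebra_simps)
qed

lemma integral_inner_self_eq_0_imp_eq_0:
  fixes h :: "real \<Rightarrow> 'a::euclidean_space"
  assumes "a < b" and h: "continuous_on {a..b} h"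
    and "integral {a..b} (\<lambda>t. h t \<bullet> h t) = 0" and t: "t \<in> {a..b}"
  shows "h t = 0"
proof -
  have "h t \<bullet> h t = 0"
  proof (rule has_integral_0_cbox_imp_0[of a b "\<lambda>t. h t \<bullet> h t"])
    show "continuous_on (cbox a b) (\<lambda>t. h t \<bullet> h t)"
      using h by (simp add: continuous_on_inner)
    then show "((\<lambda>t. h t \<bullet> h t) has_integral 0) (cbox a b)"
      using assms(3) integrable_continuous[of a b] by (metis box_real(2) has_integral_integral)
  qed (use assms in auto)
  then show ?thesis by simp
qed

lemma du_bois_reymond:
  fixes a q :: "real \<Rightarrow> 'a::euclidean_space"
  assumes T: "0 < T" and a: "continuous_on {0..T} a" and q: "continuous_on {0..T} q"
    and vanish: "\<And>h. continuous_on {0..T} h \<Longrightarrow>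
        integral {0..T} (\<lambda>t. a t \<bullet> integral {0..t} h + q t \<bullet> h t) = 0"
    and t: "t \<in> {0..T}"
  shows "q t = integral {0..t} a - integral {0..T} a"
proof -
  \<comment> \<open>Test with \<open>h = q + A\<close>, where \<open>A t = \<integral>\<^sub>t\<^sup>T a\<close>: an integration by parts turns
    the hypothesis into \<open>\<integral> h \<bullet> h = 0\<close>.\<close>
  define A where "A t = integral {0..T} a - integral {0..t} a" for t
  have A_deriv: "(A has_vector_derivative - a t) (at t within {0..T})" if "t \<in> {0..T}" for t
    unfolding A_def using integral_has_vector_derivative[OF a that] by (auto intro!: derivative_eq_intros)
  have A_cont: "continuous_on {0..T} A"
    unfolding A_def by (intro continuous_intros indefinite_integral_continuous_1 integrable_continuous_real a)
  define h where "h t = q t + A t" for t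
  have h_cont: "continuous_on {0..T} h" unfolding h_def by (intro continuous_intros q A_cont)
  define g where "g t = integral {0..t} h" for t
  have g_cont: "continuous_on {0..T} g"
    unfolding g_def by (intro indefinite_integral_continuous_1 integrable_continuous_real h_cont)
  have by_parts: "((\<lambda>t. A t \<bullet> h t + - a t \<bullet> g t) has_integral 0) {0..T}"
    using has_integral_inner_product_rule[OF _ A_deriv integral_has_vector_derivative[OF h_cont]] T
    by (simp add: A_def g_def)
  have integrable: "(\<lambda>t. A t \<bullet> h t) integrable_on {0..T}" "(\<lambda>t. a t \<bullet> g t) integrable_on {0..T}"
    "(\<lambda>t. q t \<bullet> h t) integrable_on {0..T}"
    by (intro integrable_continuous_real continuous_intros A_cont h_cont a g_cont q)+
  have "integral {0..T} (\<lambda>t. h t \<bullet> h t)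
      = (integral {0..T} (\<lambda>t. a t \<bullet> g t) + integral {0..T} (\<lambda>t. q t \<bullet> h t))
      + (integral {0..T} (\<lambda>t. A t \<bullet> h t) - integral {0..T} (\<lambda>t. a t \<bullet> g t))"
    using integrable by (simp add: h_def inner_add_left integral_add)
  also have "\<dots> = 0"
    using vanish[OF h_cont] integral_unique[OF by_parts] integrable
    by (simp add: g_def integral_add integral_diff)
  finally have "h t = 0"
    using integral_inner_self_eq_0_imp_eq_0[OF T h_cont _ t] by blast
  then show ?thesis by (simp add: h_def A_def eq_neg_iff_add_eq_0 algebra_simps)
qed

section \<open>First variation of the cost\<close>

lemma admissible_field_perturb:
  assumes "admissible_field T u" and g: "continuous_on {0..T} g" and h: "continuous_on {0..T} h"
  shows "admissible_field T (\<lambda>t y. u t (y - g t) + h t)"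
proof -
  obtain L where u_cont: "continuous_on ({0..T} \<times> UNIV) (\<lambda>z. u (fst z) (snd z))"
    and u_lip: "\<And>t. t \<in> {0..T} \<Longrightarrow> L-lipschitz_on UNIV (u t)"
    using assms(1) unfolding admissible_field_def by blast
  have "continuous_on ({0..T} \<times> UNIV) (\<lambda>z. u (fst (fst z, snd z - g (fst z))) (snd (fst z, snd z - g (fst z))))"
    by (intro continuous_on_compose2[OF u_cont] continuous_intros continuous_on_compose2[OF g]) auto
  moreover have "continuous_on ({0..T} \<times> UNIV) (\<lambda>z::real \<times> (real^'n). h (fst z))"
    by (intro continuous_on_compose2[OF h] continuous_intros) auto
  ultimately have "continuous_on ({0..T} \<times> UNIV) (\<lambda>z. u (fst z) (snd z - g (fst z)) + h (fst z))"
    by (intro continuous_on_add) auto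
  moreover have "L-lipschitz_on UNIV (\<lambda>y. u t (y - g t) + h t)" if "t \<in> {0..T}" for t
  proof (rule lipschitz_onI)
    fix y z
    have "dist (u t (y - g t)) (u t (z - g t)) \<le> L * dist (y - g t) (z - g t)"
      by (rule lipschitz_onD[OF u_lip[OF that]]) auto
    then show "dist (u t (y - g t) + h t) (u t (z - g t) + h t) \<le> L * dist y z"
      by (simp add: dist_norm)
  qed (rule lipschitz_on_nonneg[OF u_lip[OF that]])
  ultimately show ?thesis
    unfolding admissible_field_def by blast
qed

lemma trajectory_perturb:
  assumes "trajectory T u x0 X" and "g 0 = 0"
    and g_deriv: "\<And>t. t \<in> {0..T} \<Longrightarrow> (g has_vector_derivative h t) (at t within {0..T})"
  shows "trajectory T (\<lambda>t y. u t (y - g t) + h t) x0 (\<lambda>t. X t + g t)"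
  using assms unfolding trajectory_def by (auto intro!: derivative_eq_intros)

lemma has_real_derivative_integral_perturbation:
  fixes \<phi> :: "'a::real_normed_vector \<Rightarrow> 'b::real_normed_vector \<Rightarrow> real" and T :: real
  assumes phi_deriv: "\<And>z. ((\<lambda>w. \<phi> (fst w) (snd w)) has_derivative blinfun_apply (D\<phi> z)) (at z)"
    and phi_C1: "continuous_on UNIV D\<phi>"
    and cont: "continuous_on {0..T} X" "continuous_on {0..T} U" "continuous_on {0..T} g" "continuous_on {0..T} h"
  shows "((\<lambda>e. integral {0..T} (\<lambda>t. \<phi> (X t + e *\<^sub>R g t) (U t + e *\<^sub>R h t))) has_real_derivative
      integral {0..T} (\<lambda>t. blinfun_apply (D\<phi> (X t, U t)) (g t, h t))) (at 0)"
proof -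
  define W where "W e t = (X t + e *\<^sub>R g t, U t + e *\<^sub>R h t)" for e t
  define \<phi>' where "\<phi>' e t = blinfun_apply (D\<phi> (W e t)) (g t, h t)" for e t
  have "((\<lambda>e. integral (cbox 0 T) (\<lambda>t. \<phi> (fst (W e t)) (snd (W e t)))) has_real_derivative
      integral (cbox 0 T) (\<phi>' 0)) (at 0 within UNIV)"
  proof (rule leibniz_rule_field_derivative)
    fix e t
    have "((\<lambda>e. W e t) has_derivative (\<lambda>d. d *\<^sub>R (g t, h t))) (at e)"
      unfolding W_def by (auto intro!: derivative_eq_intros)
    from has_derivative_compose[OF this phi_deriv]
    show "((\<lambda>e. \<phi> (fst (W e t)) (snd (W e t))) has_real_derivative \<phi>' e t) (at e within UNIV)"
      unfolding has_field_derivative_def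
      by (rule has_derivative_eq_rhs) (simp only: blinfun.scaleR_right real_scaleR_def, simp add: \<phi>'_def fun_eq_iff mult.commute)
  next
    have W_cont: "continuous_on (UNIV \<times> {0..T}) (\<lambda>z. W (fst z) (snd z))"
      unfolding W_def
      by (intro continuous_intros continuous_on_compose2[OF cont(1)] continuous_on_compose2[OF cont(2)]
          continuous_on_compose2[OF cont(3)] continuous_on_compose2[OF cont(4)]) auto
    have phi_cont: "continuous_on UNIV (\<lambda>w. \<phi> (fst w) (snd w))"
      using phi_deriv has_derivative_continuous continuous_at_imp_continuous_on by blast
    have W_slice_cont: "continuous_on {0..T} (W e)" for e
      unfolding W_def by (intro continuous_intros cont)
    show "(\<lambda>t. \<phi> (fst (W e t)) (snd (W e t))) integrable_on cbox 0 T" for e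
      using continuous_on_compose2[OF phi_cont W_slice_cont, of e]
      by (simp add: integrable_continuous_real)
    have "continuous_on (UNIV \<times> {0..T}) (\<lambda>z. D\<phi> (W (fst z) (snd z)))"
      using continuous_on_compose2[OF phi_C1 W_cont] by simp
    then show "continuous_on (UNIV \<times> cbox 0 T) (\<lambda>(e, t). \<phi>' e t)"
      unfolding \<phi>'_def case_prod_beta
      by (intro continuous_intros continuous_on_compose2[OF cont(3)] continuous_on_compose2[OF cont(4)]) auto
  qed auto
  moreover have "\<phi>' 0 = (\<lambda>t. blinfun_apply (D\<phi> (X t, U t)) (g t, h t))"
    by (simp add: fun_eq_iff \<phi>'_def W_def)
  ultimately show ?thesis by (simp add: W_def)
qed

lemma optimal_field_first_variation:
  fixes \<phi> :: "real^'n \<Rightarrow> real^'n \<Rightarrow> real" and T :: real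
  assumes phi_deriv: "\<And>z. ((\<lambda>w. \<phi> (fst w) (snd w)) has_derivative blinfun_apply (D\<phi> z)) (at z)"
    and phi_C1: "continuous_on UNIV D\<phi>"
    and u_opt: "optimal_field T \<phi> u" and X: "trajectory T u x0 X"
    and h: "continuous_on {0..T} h"
  shows "integral {0..T} (\<lambda>t. partial_x D\<phi> (X t) (u t (X t)) \<bullet> integral {0..t} h
      + partial_xi D\<phi> (X t) (u t (X t)) \<bullet> h t) = 0"
proof -
  have adm: "admissible_field T u" using u_opt by (simp add: optimal_field_def)
  define g where "g t = integral {0..t} h" for t
  have g_deriv: "(g has_vector_derivative h t) (at t within {0..T})" if "t \<in> {0..T}" for t
    unfolding g_def by (rule integral_has_vector_derivative[OF h that])
  have g_cont: "continuous_on {0..T} g"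
    unfolding g_def by (intro indefinite_integral_continuous_1 integrable_continuous_real h)
  have X_cont: "continuous_on {0..T} X" using X by (rule trajectory_continuous_on)
  define J where "J e = integral {0..T} (\<lambda>t. \<phi> (X t + e *\<^sub>R g t) (u t (X t) + e *\<^sub>R h t))" for e
  have "J 0 \<le> J e" for e
  proof -
    have "admissible_field T (\<lambda>t y. u t (y - e *\<^sub>R g t) + e *\<^sub>R h t)"
      by (intro admissible_field_perturb adm continuous_intros g_cont h)
    moreover have "trajectory T (\<lambda>t y. u t (y - e *\<^sub>R g t) + e *\<^sub>R h t) x0 (\<lambda>t. X t + e *\<^sub>R g t)"
    proof (rule trajectory_perturb[OF X])
      show "e *\<^sub>R g 0 = 0" by (simp add: g_def)
      show "((\<lambda>t. e *\<^sub>R g t) has_vector_derivative e *\<^sub>R h t) (at t within {0..T})" if "t \<in> {0..T}" for t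
        using g_deriv[OF that] by (auto intro!: derivative_eq_intros)
    qed
    ultimately have "cost T \<phi> u X
        \<le> cost T \<phi> (\<lambda>t y. u t (y - e *\<^sub>R g t) + e *\<^sub>R h t) (\<lambda>t. X t + e *\<^sub>R g t)"
      using u_opt X unfolding optimal_field_def by blast
    then show ?thesis by (simp add: cost_def J_def)
  qed
  moreover have "(J has_real_derivative integral {0..T} (\<lambda>t. blinfun_apply (D\<phi> (X t, u t (X t))) (g t, h t))) (at 0)"
    unfolding J_def
    by (intro has_real_derivative_integral_perturbation phi_deriv phi_C1 X_cont g_cont h
        admissible_field_continuous_along[OF adm X_cont])
  ultimately have "integral {0..T} (\<lambda>t. blinfun_apply (D\<phi> (X t, u t (X t))) (g t, h t)) = 0"
    by (intro DERIV_local_min[of J _ 0 1]) auto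
  then show ?thesis by (simp add: blinfun_apply_eq_partials g_def)
qed

lemma optimal_field_euler_lagrange:
  fixes \<phi> :: "real^'n \<Rightarrow> real^'n \<Rightarrow> real" and T :: real
  assumes T: "0 < T"
    and phi_deriv: "\<And>z. ((\<lambda>w. \<phi> (fst w) (snd w)) has_derivative blinfun_apply (D\<phi> z)) (at z)"
    and phi_C1: "continuous_on UNIV D\<phi>"
    and u_opt: "optimal_field T \<phi> u" and X: "trajectory T u x0 X"
  shows "\<And>t. t \<in> {0..T} \<Longrightarrow> ((\<lambda>t. partial_xi D\<phi> (X t) (u t (X t))) has_vector_derivative
      partial_x D\<phi> (X t) (u t (X t))) (at t within {0..T})"
    and "partial_xi D\<phi> (X T) (u T (X T)) = 0"
proof -
  define a where "a t = partial_x D\<phi> (X t) (u t (X t))" for t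
  define q where "q t = partial_xi D\<phi> (X t) (u t (X t))" for t
  have "admissible_field T u" using u_opt by (simp add: optimal_field_def)
  then have "continuous_on {0..T} (\<lambda>t. u t (X t))"
    by (rule admissible_field_continuous_along[OF _ trajectory_continuous_on[OF X]])
  then have "continuous_on {0..T} (\<lambda>t. D\<phi> (X t, u t (X t)))"
    using continuous_on_compose2[OF phi_C1, of _ "\<lambda>t. (X t, u t (X t))"] trajectory_continuous_on[OF X]
    by (simp add: continuous_on_Pair)
  then have a_cont: "continuous_on {0..T} a" and q_cont: "continuous_on {0..T} q"
    unfolding a_def q_def partial_x_def partial_xi_def by (intro continuous_intros; assumption)+
  have "integral {0..T} (\<lambda>t. a t \<bullet> integral {0..t} h + q t \<bullet> h t) = 0" if "continuous_on {0..T} h" for h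
    unfolding a_def q_def by (rule optimal_field_first_variation[OF phi_deriv phi_C1 u_opt X that])
  then have q_eq: "q t = integral {0..t} a - integral {0..T} a" if "t \<in> {0..T}" for t
    by (rule du_bois_reymond[OF T a_cont q_cont _ that])
  show "(q has_vector_derivative a t) (at t within {0..T})" if t: "t \<in> {0..T}" for t
  proof (rule has_vector_derivative_transform[OF t])
    show "((\<lambda>t. integral {0..t} a - integral {0..T} a) has_vector_derivative a t) (at t within {0..T})"
      using integral_has_vector_derivative[OF a_cont t] by (auto intro!: derivative_eq_intros)
  qed (simp add: q_eq)
  show "q T = 0" using q_eq[of T] T by simp
qed

lemma transport_along_trajectory:
  fixes p :: "real \<Rightarrow> real^'n \<Rightarrow> real^'n" and T :: real
  assumes p_deriv: "\<And>t x. t \<in> {0..T} \<Longrightarrow>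
        ((\<lambda>w. p (fst w) (snd w)) has_derivative Dp t x) (at (t, x) within {0..T} \<times> UNIV)"
    and p_pde: "\<And>t x j. t \<in> {0..T} \<Longrightarrow>
        Dp t x (1, 0) $ j + Dp t x (0, u t x) $ j + p t x \<bullet> Du t x (axis j 1)
          = blinfun_apply (D\<phi> (x, u t x)) (axis j 1, Du t x (axis j 1))"
    and X: "trajectory T u x0 X" and t: "t \<in> {0..T}"
  shows "((\<lambda>t. p t (X t)) has_vector_derivative partial_x D\<phi> (X t) (u t (X t))
      + row_times (partial_xi D\<phi> (X t) (u t (X t)) - p t (X t)) (Du t (X t))) (at t within {0..T})"
proof -
  have graph: "((\<lambda>s. (s, X s)) has_vector_derivative (1, u t (X t))) (at t within {0..T})"
    using X t unfolding trajectory_def by (auto intro!: derivative_eq_intros)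
  have "((\<lambda>w. p (fst w) (snd w)) has_derivative Dp t (X t)) (at (t, X t) within (\<lambda>s. (s, X s)) ` {0..T})"
    by (rule has_derivative_subset[OF p_deriv[OF t]]) auto
  from vector_derivative_diff_chain_within[OF graph this]
  have "((\<lambda>t. p t (X t)) has_vector_derivative Dp t (X t) (1, u t (X t))) (at t within {0..T})"
    by (simp add: o_def)
  moreover have "Dp t (X t) (1, u t (X t)) = partial_x D\<phi> (X t) (u t (X t))
      + row_times (partial_xi D\<phi> (X t) (u t (X t)) - p t (X t)) (Du t (X t))"
  proof -
    have "Dp t (X t) (1, u t (X t)) = Dp t (X t) (1, 0) + Dp t (X t) (0, u t (X t))"
      using linear_add[OF has_derivative_linear[OF p_deriv[OF t, of "X t"]], of "(1, 0)" "(0, u t (X t))"] by simp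
    then show ?thesis
      using p_pde[OF t, of "X t"]
      by (simp add: vec_eq_iff row_times_def blinfun_apply_eq_partials inner_axis inner_diff_left algebra_simps)
  qed
  ultimately show ?thesis by simp
qed

theorem mainTheorem6:
  fixes \<phi> :: "real^'n \<Rightarrow> real^'n \<Rightarrow> real"
    and D\<phi> :: "(real^'n) \<times> (real^'n) \<Rightarrow> ((real^'n) \<times> (real^'n)) \<Rightarrow>\<^sub>L real"
    and u :: "real \<Rightarrow> real^'n \<Rightarrow> real^'n"
    and Du :: "real \<Rightarrow> real^'n \<Rightarrow> real^'n \<Rightarrow> real^'n"
    and p :: "real \<Rightarrow> real^'n \<Rightarrow> real^'n"
    and Dp :: "real \<Rightarrow> real^'n \<Rightarrow> real \<times> (real^'n) \<Rightarrow> real^'n"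
    and T :: real
  assumes T_pos: "0 < T"
    and phi_deriv: "\<And>z. ((\<lambda>w. \<phi> (fst w) (snd w)) has_derivative blinfun_apply (D\<phi> z)) (at z)"
    and phi_C1: "continuous_on UNIV D\<phi>"
    and u_opt: "optimal_field T \<phi> u"
    and u_deriv: "\<And>t x. t \<in> {0..T} \<Longrightarrow> (u t has_derivative Du t x) (at x)"
    and p_deriv: "\<And>t x. t \<in> {0..T} \<Longrightarrow>
        ((\<lambda>w. p (fst w) (snd w)) has_derivative Dp t x) (at (t, x) within {0..T} \<times> UNIV)"
    and p_pde: "\<And>t x j. t \<in> {0..T} \<Longrightarrow>
        Dp t x (1, 0) $ j + Dp t x (0, u t x) $ j + p t x \<bullet> Du t x (axis j 1)
          = blinfun_apply (D\<phi> (x, u t x)) (axis j 1, Du t x (axis j 1))"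
    and p_final: "\<And>x. p T x = 0"
  shows "\<forall>t\<in>{0..T}. \<forall>x. p t x = partial_xi D\<phi> x (u t x)"
proof (intro ballI allI)
  fix t0 x assume t0: "t0 \<in> {0..T}"
  have adm: "admissible_field T u" using u_opt by (simp add: optimal_field_def)
  then obtain L where u_lip: "\<And>t. t \<in> {0..T} \<Longrightarrow> L-lipschitz_on UNIV (u t)"
    unfolding admissible_field_def by blast
  obtain x0 X where X: "trajectory T u x0 X" and "X t0 = x"
    using admissible_field_trajectory_through[OF adm t0] by blast
  note costate = optimal_field_euler_lagrange[OF T_pos phi_deriv phi_C1 u_opt X]
  define R where "R t = partial_xi D\<phi> (X t) (u t (X t)) - p t (X t)" for t
  have R_deriv: "(R has_vector_derivative - row_times (R t) (Du t (X t))) (at t within {0..T})"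
    if "t \<in> {0..T}" for t
    using has_vector_derivative_diff[OF costate(1) transport_along_trajectory[OF p_deriv p_pde X]] that
    unfolding R_def[abs_def] by simp
  have "- L * (R t \<bullet> R t) \<le> R t \<bullet> - row_times (R t) (Du t (X t))" if "t \<in> {0..T}" for t
    using row_times_inner_le[OF u_lip u_deriv, OF that that] by (simp add: inner_commute)
  moreover have "R T = 0" using costate(2) p_final by (simp add: R_def)
  ultimately have "R t0 = 0" using backward_uniqueness_zero[OF R_deriv] t0 by blast
  then show "p t0 x = partial_xi D\<phi> x (u t0 x)"
    using \<open>X t0 = x\<close> by (simp add: R_def)
qed

end
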